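(* Let $\mu=\mu^{(1)}$ be the Cox point process described in the context (with $l=1$) and $r=r^{(1)}$ its Papangelou intensity. Then for each $n\in\mathbb N$ and for $\nu$-a.a. $x\in X$, $$\int_\Gamma r(x,\gamma)^n\,\mu(d\gamma)\le\frac{(2n)!}{2^n\,n!}\,k(x,x)^n .$$
   Context: $X$ is a locally compact Polish space, $\nu$ a non-atomic Radon measure on $X$, $\mathcal B_0(X)$ the relatively compact Borel sets; $\Gamma$ is the space of locally finite subsets of $X$ (configurations) with the vague topology and Borel $\sigma$-algebra. $K$ is a bounded self-adjoint nonnegative operator on the real space $L^2(X,\nu)$, locally of trace class; $\sqrt K$ has integral kernel $\varkappa$ and $k(x,y)=\int_X\varkappa(x,z)\varkappa(y,z)\nu(dz)$, so $k(x,x)=\|\varkappa(x,\cdot)\|^2_{L^2(X,\nu)}$. $Y=(Y(x))_{x\in X}$ is a random field on $(\Omega,\mathcal A,\mathbb P)$ with $(x,\omega)\mapsto Y(x,\omega)$ measurable, $Y(x)$ centered Gaussian for $\nu$-a.a. $x$, and $\mathbb E(Y(x)Y(y))=k(x,y)$ for $\nu^{\otimes2}$-a.a. $(x,y)$ and $\nu$-a.a. $x=y$. $\mu^{(1)}$ is the Cox process $\mu^{(1)}(d\gamma)=\int_\Omega\mathbb P(d\omega)\pi_{Y(x,\omega)^2\nu(dx)}(d\gamma)$, where $\pi_{g(x)\nu(dx)}$ is the Poisson point process with intensity $g\,d\nu$. With $\widetilde{\mathbb P}(d\omega,d\gamma)=\mathbb P(d\omega)\pi_{Y(x,\omega)^2\nu(dx)}(d\gamma)$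 on $\Omega\times\Gamma$ and $\mathcal F$ the $\sigma$-algebra generated by the maps $(\omega,\gamma)\mapsto F(\gamma)$, the Papangelou intensity is $r^{(1)}(x,\gamma)=\widetilde{\mathbb E}(Y(x)^2\mid\mathcal F)(\gamma)$. *)

theory Defs
  imports "HOL-Probability.Probability"
begin

definition relcompact_borel :: "'a::topological_space set set" where
  "relcompact_borel = {L. L \<in> sets borel \<and> compact (closure L)}"

definition locfin :: "'a::topological_space set \<Rightarrow> bool" where
  "locfin g \<longleftrightarrow> (\<forall>C. compact C \<longrightarrow> finite (g \<inter> C))"

text \<open>The configuration space Gamma as a measurable space: its sigma-algebra is generated
  by the counting maps g |-> card (g \<inter> L), L relatively compact Borel (this is the Borel
  sigma-algebra of the vague topology).\<close>
definition Gamma_M :: "'a::topological_space set measure" where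
  "Gamma_M = sigma {g. locfin g}
     {{g. locfin g \<and> card (g \<inter> L) = n} | L n. L \<in> relcompact_borel}"

definition poisson_pp :: "'a::topological_space measure \<Rightarrow> ('a \<Rightarrow> real) \<Rightarrow> 'a set measure \<Rightarrow> bool" where
  "poisson_pp nu g P \<longleftrightarrow> prob_space P \<and> sets P = sets Gamma_M \<and>
     (\<forall>(I::nat set) L n. finite I \<longrightarrow> (\<forall>i\<in>I. L i \<in> relcompact_borel) \<longrightarrow> disjoint_family_on L I \<longrightarrow>
        emeasure P {G \<in> space Gamma_M. \<forall>i\<in>I. card (G \<inter> L i) = n i}
        = (\<Prod>i\<in>I. ennreal (exp (- enn2real (\<integral>\<^sup>+x\<in>L i. ennreal (g x) \<partial>nu))
                 * enn2real (\<integral>\<^sup>+x\<in>L i. ennreal (g x) \<partial>nu) ^ n i / fact (n i))))"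

definition centered_gaussian :: "'w measure \<Rightarrow> ('w \<Rightarrow> real) \<Rightarrow> bool" where
  "centered_gaussian P Z \<longleftrightarrow> Z \<in> borel_measurable P \<and>
     (\<exists>s\<ge>0. distr P borel Z = (if s = 0 then return borel 0 else density lborel (normal_density 0 s)))"

definition kk :: "'a measure \<Rightarrow> ('a \<Rightarrow> 'a \<Rightarrow> real) \<Rightarrow> 'a \<Rightarrow> 'a \<Rightarrow> real" where
  "kk nu kap x y = (\<integral>z. kap x z * kap y z \<partial>nu)"

text \<open>The conditional expectation is
  F-measurable, hence does not depend on the Omega-coordinate; we evaluate it at any omega.\<close>
definition papangelou ::
  "'w measure \<Rightarrow> ('w \<times> 'a::topological_space set) measure \<Rightarrow> ('w \<Rightarrow> 'a \<Rightarrow> real) \<Rightarrow> 'a \<Rightarrow> 'a set \<Rightarrow> real" where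
  "papangelou P Pt Y x G =
     real_cond_exp Pt (vimage_algebra (space Pt) snd Gamma_M) (\<lambda>z. (Y (fst z) x)\<^sup>2)
       (SOME w. w \<in> space P, G)"

end

theory Submission
  imports Defs
begin

text \<open>
  Since r(x, G) is the conditional expectation of Y(x)^2 given the configuration G, the
  conditional Jensen inequality gives r(x, G)^n <= E(Y(x)^(2n) | F); integrating against mu, the
  Gamma-marginal of P~, bounds the n-th moment of r(x, .) under mu by E Y(x)^(2n), the 2n-th moment
  of a centered Gaussian of variance k(x, x), which is (2n)! / (2^n n!) k(x, x)^n.  For P~ to be a
  probability measure with Omega-marginal P, the intensities Y(w, .)^2 nu must be almost surely
  locally finite; this holds because E int_L Y^2 dnu = int_L k(x, x) nu(dx) is finite for
  relatively compact L (local trace class).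
\<close>

section \<open>Even moments of centered Gaussians\<close>

lemma has_bochner_integral_normal_even_moment:
  assumes "s \<ge> 0"
  shows "has_bochner_integral (if s = 0 then return borel 0 else density lborel (normal_density 0 s))
           (\<lambda>t::real. t ^ (2 * n)) (fact (2 * n) / (2 ^ n * fact n) * (s\<^sup>2) ^ n)"
proof (cases "s = 0")
  case True
  have "has_bochner_integral (return borel (0::real)) (\<lambda>t. t ^ (2 * n)) (0 ^ (2 * n))"
    by (simp add: has_bochner_integral_iff integrable_iff_bounded nn_integral_return integral_return)
  then show ?thesis using True by (cases n) auto
next
  case False
  then have "s > 0" using assms by simp
  then have "has_bochner_integral (density lborel (normal_density 0 s)) (\<lambda>t. t ^ (2 * n))
      (fact (2 * n) / ((2 / s\<^sup>2) ^ n * fact n))"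
    using normal_moment_even[OF \<open>s > 0\<close>, of 0 n] by (intro has_bochner_integral_density) auto
  moreover have "fact (2 * n) / ((2 / s\<^sup>2) ^ n * fact n) = fact (2 * n) / (2 ^ n * fact n) * (s\<^sup>2) ^ n"
    using \<open>s > 0\<close> by (simp add: power_divide field_simps)
  ultimately show ?thesis using False by simp
qed

lemma centered_gaussian_even_moment:
  assumes "centered_gaussian P Z"
  shows "has_bochner_integral P (\<lambda>w. Z w ^ (2 * n))
           (fact (2 * n) / (2 ^ n * fact n) * (\<integral>w. (Z w)\<^sup>2 \<partial>P) ^ n)"
proof -
  obtain s where "s \<ge> 0" and [measurable]: "Z \<in> borel_measurable P"
    and distr_Z: "distr P borel Z = (if s = 0 then return borel 0 else density lborel (normal_density 0 s))"
    using assms unfolding centered_gaussian_def by blast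
  have moment: "has_bochner_integral P (\<lambda>w. Z w ^ (2 * k)) (fact (2 * k) / (2 ^ k * fact k) * (s\<^sup>2) ^ k)" for k
    using has_bochner_integral_normal_even_moment[OF \<open>s \<ge> 0\<close>, of k]
    unfolding distr_Z[symmetric] by (simp add: has_bochner_integral_iff integrable_distr_eq integral_distr)
  have "(\<integral>w. (Z w)\<^sup>2 \<partial>P) = s\<^sup>2"
    using has_bochner_integral_integral_eq[OF moment[of 1]] by simp
  then show ?thesis using moment[of n] by simp
qed

section \<open>Locally finite measures on locally compact Polish spaces\<close>

lemma locally_compact_countable_cofinal_compacts:
  assumes "locally_compact_space (euclidean :: 'a::polish_space topology)"
  obtains T :: "'a::polish_space set set"
  where "countable T" "\<And>K. K \<in> T \<Longrightarrow> compact K" "\<And>C. compact C \<Longrightarrow> \<exists>K\<in>T. C \<subseteq> K"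
proof -
  obtain B :: "'a set set" where B: "countable B" "topological_basis B"
    using ex_countable_basis by blast
  define U where "U = {V\<in>B. compact (closure V)}"
  have U_open: "open V" if "V \<in> U" for V
    using B(2) topological_basis_open that U_def by auto
  have U_cover: "\<exists>V\<in>U. x \<in> V" for x
  proof -
    obtain W K where W: "open W" "compact K" "x \<in> W" "W \<subseteq> K"
      using assms unfolding locally_compact_space_def
      by (metis UNIV_I compactin_euclidean_iff open_openin topspace_euclidean)
    obtain V where V: "V \<in> B" "x \<in> V" "V \<subseteq> W"
      using topological_basisE[OF B(2) W(1) W(3)] by blast
    have "closure V \<subseteq> K"
      using W V closure_minimal compact_imp_closed by (metis subset_trans)
    then have "compact (closure V)"
      using W(2) compact_Int_closed[of K "closure V"] by (metis closed_closure inf.absorb_iff2)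
    then show ?thesis using V U_def by blast
  qed
  define T where "T = (\<lambda>F. \<Union>V\<in>F. closure V) ` {F. finite F \<and> F \<subseteq> U}"
  have "countable U" using B(1) unfolding U_def by simp
  then have "countable T"
    unfolding T_def using countable_Collect_finite_subset by blast
  moreover have "compact K" if "K \<in> T" for K
    using that unfolding T_def U_def by auto
  moreover have "\<exists>K\<in>T. C \<subseteq> K" if "compact C" for C
  proof -
    have "C \<subseteq> \<Union>U" using U_cover by blast
    then obtain F where F: "F \<subseteq> U" "finite F" "C \<subseteq> \<Union>F"
      using compactE[OF \<open>compact C\<close> _ U_open] by metis
    then have "C \<subseteq> (\<Union>V\<in>F. closure V)" using closure_subset by blast
    then show ?thesis using F unfolding T_def by blast
  qed
  ultimately show thesis by (rule that)
qed

lemma sigma_finite_measure_finite_on_compacts: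
  fixes nu :: "'a::polish_space measure"
  assumes "locally_compact_space (euclidean :: 'a topology)" and "sets nu = sets borel"
    and "\<And>C. compact C \<Longrightarrow> emeasure nu C < \<infinity>"
  shows "sigma_finite_measure nu"
proof
  obtain T :: "'a set set" where T: "countable T" "\<And>K. K \<in> T \<Longrightarrow> compact K"
    "\<And>C. compact C \<Longrightarrow> \<exists>K\<in>T. C \<subseteq> K"
    using locally_compact_countable_cofinal_compacts[OF assms(1)] by blast
  have "\<Union>T = space nu"
    using T(3)[OF compact_sing] sets_eq_imp_space_eq[OF assms(2)] by auto
  then show "\<exists>A. countable A \<and> A \<subseteq> sets nu \<and> \<Union>A = space nu \<and> (\<forall>a\<in>A. emeasure nu a \<noteq> \<infinity>)"
    using T assms(2,3) by (intro exI[of _ T]) (auto simp: compact_imp_closed less_imp_neq)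
qed

lemma AE_nn_integral_relcompact_finite:
  fixes nu :: "'a::polish_space measure" and f :: "'w \<Rightarrow> 'a \<Rightarrow> ennreal"
  assumes "locally_compact_space (euclidean :: 'a topology)" and "sets nu = sets borel"
    and "sigma_finite_measure nu" and "sigma_finite_measure P"
    and f: "(\<lambda>(w, x). f w x) \<in> borel_measurable (P \<Otimes>\<^sub>M nu)"
    and finite_mean: "\<And>L. L \<in> relcompact_borel \<Longrightarrow> (\<integral>\<^sup>+x\<in>L. (\<integral>\<^sup>+w. f w x \<partial>P) \<partial>nu) < \<infinity>"
  shows "AE w in P. \<forall>L\<in>relcompact_borel. (\<integral>\<^sup>+x\<in>L. f w x \<partial>nu) < \<infinity>"
proof -
  interpret pair_sigma_finite P nu
    using assms(3,4) by (simp add: pair_sigma_finite_def)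
  have f'[measurable]: "(\<lambda>z. f (fst z) (snd z)) \<in> borel_measurable (P \<Otimes>\<^sub>M nu)"
    using f by (simp add: case_prod_beta')
  have f_section: "(\<lambda>w. f w x) \<in> borel_measurable P" if "x \<in> space nu" for x
    using measurable_compose[OF measurable_Pair2'[OF that] f'] by simp
  obtain T :: "'a set set" where T: "countable T" "\<And>K. K \<in> T \<Longrightarrow> compact K"
    "\<And>C. compact C \<Longrightarrow> \<exists>K\<in>T. C \<subseteq> K"
    using locally_compact_countable_cofinal_compacts[OF assms(1)] by blast
  have "AE w in P. \<forall>K\<in>T. (\<integral>\<^sup>+x\<in>K. f w x \<partial>nu) < \<infinity>"
  proof (rule AE_ball_countable'[OF _ T(1)])
    fix K assume "K \<in> T"
    then have [measurable]: "K \<in> sets nu" and "K \<in> relcompact_borel"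
      using T(2) assms(2) by (auto simp: relcompact_borel_def compact_imp_closed closure_closed)
    have "(\<integral>\<^sup>+w. (\<integral>\<^sup>+x\<in>K. f w x \<partial>nu) \<partial>P) = (\<integral>\<^sup>+x. (\<integral>\<^sup>+w. f w x * indicator K x \<partial>P) \<partial>nu)"
      using Fubini'[of "\<lambda>w x. f w x * indicator K x"] by simp
    also have "\<dots> = (\<integral>\<^sup>+x\<in>K. (\<integral>\<^sup>+w. f w x \<partial>P) \<partial>nu)"
      by (rule nn_integral_cong, rule nn_integral_multc, rule f_section)
    also have "\<dots> < \<infinity>" using finite_mean[OF \<open>K \<in> relcompact_borel\<close>] .
    finally have "(\<integral>\<^sup>+w. (\<integral>\<^sup>+x\<in>K. f w x \<partial>nu) \<partial>P) \<noteq> \<infinity>"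
      by (rule less_imp_neq)
    then have "AE w in P. (\<integral>\<^sup>+x\<in>K. f w x \<partial>nu) \<noteq> \<infinity>"
      by (rule nn_integral_PInf_AE[rotated]) measurable
    then show "AE w in P. (\<integral>\<^sup>+x\<in>K. f w x \<partial>nu) < \<infinity>"
      by (simp add: top.not_eq_extremum)
  qed
  then show ?thesis
  proof eventually_elim
    case (elim w)
    show ?case
    proof
      fix L :: "'a set" assume "L \<in> relcompact_borel"
      then obtain K where "K \<in> T" "closure L \<subseteq> K"
        using T(3) unfolding relcompact_borel_def by blast
      then have "L \<subseteq> K" using closure_subset by blast
      then have "(\<integral>\<^sup>+x\<in>L. f w x \<partial>nu) \<le> (\<integral>\<^sup>+x\<in>K. f w x \<partial>nu)"
        by (intro nn_integral_mono) (auto split: split_indicator)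
      also have "\<dots> < \<infinity>" using elim \<open>K \<in> T\<close> by blast
      finally show "(\<integral>\<^sup>+x\<in>L. f w x \<partial>nu) < \<infinity>" .
    qed
  qed
qed

section \<open>The Cox mixture\<close>

lemma has_bochner_integral_measure_preserving:
  fixes u :: "'b \<Rightarrow> real"
  assumes "g \<in> measurable M N" and "distr M N g = N" and "has_bochner_integral N u I"
  shows "has_bochner_integral M (\<lambda>z. u (g z)) I"
  using assms integrable_distr_eq[OF assms(1), of u] integral_distr[OF assms(1), of u]
  by (auto simp: has_bochner_integral_iff)

lemma distr_fst_mixture:
  assumes sets_M: "sets M = sets (P \<Otimes>\<^sub>M N)"
    and emeasure_M: "\<And>A B. A \<in> sets P \<Longrightarrow> B \<in> sets N \<Longrightarrow>
        emeasure M (A \<times> B) = (\<integral>\<^sup>+w. indicator A w * emeasure (Q w) B \<partial>P)"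
    and Q_prob: "AE w in P. emeasure (Q w) (space N) = 1"
  shows "distr M P fst = P"
proof (rule measure_eqI)
  have fst: "fst \<in> measurable M P"
    using measurable_cong_sets[OF sets_M refl] measurable_fst by blast
  fix A assume "A \<in> sets (distr M P fst)"
  then have A: "A \<in> sets P" by simp
  have "fst -` A \<inter> space M = A \<times> space N"
    using sets.sets_into_space[OF A] sets_eq_imp_space_eq[OF sets_M] by (auto simp: space_pair_measure)
  then have "emeasure (distr M P fst) A = (\<integral>\<^sup>+w. indicator A w * emeasure (Q w) (space N) \<partial>P)"
    using emeasure_M[OF A sets.top] by (simp add: emeasure_distr[OF fst A])
  also have "\<dots> = (\<integral>\<^sup>+w. indicator A w \<partial>P)"
    by (rule nn_integral_cong_AE) (use Q_prob in auto)
  also have "\<dots> = emeasure P A"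
    using A by simp
  finally show "emeasure (distr M P fst) A = emeasure P A" .
qed simp

lemma emeasure_space_poisson_pp:
  assumes "poisson_pp nu g Q"
  shows "emeasure Q (space Gamma_M) = 1"
proof -
  interpret prob_space Q using assms unfolding poisson_pp_def by blast
  show ?thesis
    using emeasure_space_1 sets_eq_imp_space_eq assms unfolding poisson_pp_def by metis
qed

lemma distr_fst_cox_mixture:
  fixes nu :: "'a::polish_space measure" and kap :: "'a \<Rightarrow> 'a \<Rightarrow> real"
    and P :: "'w measure" and Y :: "'w \<Rightarrow> 'a \<Rightarrow> real"
    and pi :: "('a \<Rightarrow> real) \<Rightarrow> 'a set measure" and Pt :: "('w \<times> 'a set) measure"
  assumes lc: "locally_compact_space (euclidean :: 'a topology)"
    and nu_sets: "sets nu = sets borel"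
    and nu_radon: "\<And>C. compact C \<Longrightarrow> emeasure nu C < \<infinity>"
    and kap_L2: "AE x in nu. integrable nu (\<lambda>z. (kap x z)\<^sup>2)"
    and K_loc_trace: "\<And>L. L \<in> relcompact_borel \<Longrightarrow>
        (\<integral>\<^sup>+x\<in>L. (\<integral>\<^sup>+z. ennreal ((kap x z)\<^sup>2) \<partial>nu) \<partial>nu) < \<infinity>"
    and P_prob: "prob_space P"
    and Y_meas: "(\<lambda>(w, x). Y w x) \<in> borel_measurable (P \<Otimes>\<^sub>M nu)"
    and Y_gauss: "AE x in nu. centered_gaussian P (\<lambda>w. Y w x)"
    and Y_var: "AE x in nu. (\<integral>w. (Y w x)\<^sup>2 \<partial>P) = kk nu kap x x"
    and pi_poisson: "\<And>g. g \<in> borel_measurable nu \<Longrightarrow> (\<forall>x. g x \<ge> 0) \<Longrightarrow>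
        (\<forall>L\<in>relcompact_borel. (\<integral>\<^sup>+x\<in>L. ennreal (g x) \<partial>nu) < \<infinity>) \<Longrightarrow> poisson_pp nu g (pi g)"
    and Pt_sets: "sets Pt = sets (P \<Otimes>\<^sub>M Gamma_M)"
    and Pt_rect: "\<And>A B. A \<in> sets P \<Longrightarrow> B \<in> sets Gamma_M \<Longrightarrow>
        emeasure Pt (A \<times> B) = (\<integral>\<^sup>+w. indicator A w * emeasure (pi (\<lambda>x. (Y w x)\<^sup>2)) B \<partial>P)"
  shows "distr Pt P fst = P"
proof -
  interpret P: prob_space P by (rule P_prob)
  have Y[measurable]: "(\<lambda>z. Y (fst z) (snd z)) \<in> borel_measurable (P \<Otimes>\<^sub>M nu)"
    using Y_meas by (simp add: case_prod_beta')
  have second_moment: "AE x in nu. (\<integral>\<^sup>+w. ennreal ((Y w x)\<^sup>2) \<partial>P) = (\<integral>\<^sup>+z. ennreal ((kap x z)\<^sup>2) \<partial>nu)"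
    using Y_gauss Y_var kap_L2
  proof eventually_elim
    case (elim x)
    have "integrable P (\<lambda>w. (Y w x)\<^sup>2)"
      using centered_gaussian_even_moment[OF elim(1), of 1] by (simp add: has_bochner_integral_iff)
    then have "(\<integral>\<^sup>+w. ennreal ((Y w x)\<^sup>2) \<partial>P) = ennreal (kk nu kap x x)"
      using elim(2) by (simp add: nn_integral_eq_integral)
    also have "\<dots> = (\<integral>\<^sup>+z. ennreal ((kap x z)\<^sup>2) \<partial>nu)"
      using elim(3) by (simp add: kk_def power2_eq_square nn_integral_eq_integral)
    finally show ?case .
  qed
  have "AE w in P. \<forall>L\<in>relcompact_borel. (\<integral>\<^sup>+x\<in>L. ennreal ((Y w x)\<^sup>2) \<partial>nu) < \<infinity>"
  proof (rule AE_nn_integral_relcompact_finite[OF lc nu_sets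
        sigma_finite_measure_finite_on_compacts[OF lc nu_sets nu_radon] P.sigma_finite_measure_axioms])
    show "(\<lambda>(w, x). ennreal ((Y w x)\<^sup>2)) \<in> borel_measurable (P \<Otimes>\<^sub>M nu)" by measurable
    fix L :: "'a set" assume "L \<in> relcompact_borel"
    have "(\<integral>\<^sup>+x\<in>L. (\<integral>\<^sup>+w. ennreal ((Y w x)\<^sup>2) \<partial>P) \<partial>nu)
        = (\<integral>\<^sup>+x\<in>L. (\<integral>\<^sup>+z. ennreal ((kap x z)\<^sup>2) \<partial>nu) \<partial>nu)"
      by (rule nn_integral_cong_AE) (use second_moment in auto)
    also have "\<dots> < \<infinity>" using K_loc_trace[OF \<open>L \<in> relcompact_borel\<close>] .
    finally show "(\<integral>\<^sup>+x\<in>L. (\<integral>\<^sup>+w. ennreal ((Y w x)\<^sup>2) \<partial>P) \<partial>nu) < \<infinity>" .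
  qed
  then have "AE w in P. emeasure (pi (\<lambda>x. (Y w x)\<^sup>2)) (space Gamma_M) = 1"
    using AE_space
  proof eventually_elim
    case (elim w)
    have "(\<lambda>x. (Y w x)\<^sup>2) \<in> borel_measurable nu"
      using measurable_compose[OF measurable_Pair1'[OF \<open>w \<in> space P\<close>] Y] by simp
    then have "poisson_pp nu (\<lambda>x. (Y w x)\<^sup>2) (pi (\<lambda>x. (Y w x)\<^sup>2))"
      using pi_poisson elim(1) by simp
    then show ?case by (rule emeasure_space_poisson_pp)
  qed
  then show ?thesis
  proof (rule distr_fst_mixture[OF Pt_sets, rotated])
    show "emeasure Pt (A \<times> B) = (\<integral>\<^sup>+w. indicator A w * emeasure (pi (\<lambda>x. (Y w x)\<^sup>2)) B \<partial>P)"
      if "A \<in> sets P" "B \<in> sets Gamma_M" for A B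
      using Pt_rect[OF that] .
  qed
qed

section \<open>Conditional Jensen bound for the Papangelou intensity\<close>

text \<open>The conditional Jensen inequality of the library needs convexity on all of the reals,
  which t^n lacks for odd n.\<close>

lemma convex_on_abs_power: "convex_on (UNIV::real set) (\<lambda>t. \<bar>t\<bar> ^ n)"
proof (rule convex_onI)
  fix t x y :: real assume t: "0 < t" "t < 1"
  have power_convex: "convex_on {0::real..} (\<lambda>x. x ^ n)"
    using convex_on_subset[OF convex_power_even] convex_power_odd by (cases "even n") auto
  have "\<bar>(1 - t) *\<^sub>R x + t *\<^sub>R y\<bar> \<le> (1 - t) * \<bar>x\<bar> + t * \<bar>y\<bar>"
    using abs_triangle_ineq[of "(1 - t) * x" "t * y"] t by (simp add: abs_mult)
  then have "\<bar>(1 - t) *\<^sub>R x + t *\<^sub>R y\<bar> ^ n \<le> ((1 - t) *\<^sub>R \<bar>x\<bar> + t *\<^sub>R \<bar>y\<bar>) ^ n"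
    by (simp add: power_mono)
  also have "\<dots> \<le> (1 - t) * \<bar>x\<bar> ^ n + t * \<bar>y\<bar> ^ n"
    using convex_onD[OF power_convex, of t "\<bar>x\<bar>" "\<bar>y\<bar>"] t by simp
  finally show "\<bar>(1 - t) *\<^sub>R x + t *\<^sub>R y\<bar> ^ n \<le> (1 - t) * \<bar>x\<bar> ^ n + t * \<bar>y\<bar> ^ n" .
qed simp

lemma nn_integral_real_cond_exp_power_le:
  assumes "finite_measure M" "subalgebra M F"
    and f: "integrable M f" "\<And>x. f x \<ge> 0" "integrable M (\<lambda>x. f x ^ n)"
  shows "(\<integral>\<^sup>+x. ennreal (real_cond_exp M F f x ^ n) \<partial>M) \<le> ennreal (\<integral>x. f x ^ n \<partial>M)"
proof -
  interpret sigma_finite_subalgebra M F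
    using assms(1,2) by (intro finite_measure_subalgebra_is_sigma_finite finite_measure_subalgebra.intro
        finite_measure_subalgebra_axioms.intro)
  have [measurable]: "f \<in> borel_measurable M" using f(1) by (rule borel_measurable_integrable)
  have abs_f: "(\<lambda>x. \<bar>f x\<bar> ^ n) = (\<lambda>x. f x ^ n)" using f(2) by simp
  have jensen: "AE x in M. \<bar>real_cond_exp M F f x\<bar> ^ n \<le> real_cond_exp M F (\<lambda>x. f x ^ n) x"
    using real_cond_exp_jensens_inequality(2)[OF f(1) _ _ _ convex_on_abs_power[of n]] f(3)
    unfolding abs_f by auto
  have "(\<integral>\<^sup>+x. ennreal (real_cond_exp M F f x ^ n) \<partial>M)
      \<le> (\<integral>\<^sup>+x. ennreal (real_cond_exp M F (\<lambda>x. f x ^ n) x) \<partial>M)"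
    using jensen
  proof (intro nn_integral_mono_AE, eventually_elim)
    case (elim x)
    have "real_cond_exp M F f x ^ n \<le> \<bar>real_cond_exp M F f x\<bar> ^ n"
      by (metis abs_ge_self power_abs)
    with elim show ?case by (intro ennreal_leI) linarith
  qed
  also have "\<dots> = ennreal (\<integral>x. f x ^ n \<partial>M)"
    using jensen real_cond_exp_int[OF f(3)]
    by (subst nn_integral_eq_integral) (auto elim!: eventually_mono dest: order_trans[OF zero_le_power_abs])
  finally show ?thesis .
qed

lemma measurable_vimage_algebra_factor:
  fixes h :: "'a \<Rightarrow> real"
  assumes h: "h \<in> borel_measurable (vimage_algebra X f M)" and f: "f \<in> X \<rightarrow> space M"
    and "z \<in> X" "z' \<in> X" "f z = f z'"
  shows "h z = h z'"
proof -
  have "h -` {h z} \<inter> X \<in> sets (vimage_algebra X f M)"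
    using measurable_sets[OF h, of "{h z}"] by simp
  then obtain A where A: "h -` {h z} \<inter> X = f -` A \<inter> X"
    using sets_vimage_algebra2[OF f] by auto
  have "z \<in> f -` A \<inter> X" using A \<open>z \<in> X\<close> by blast
  then have "z' \<in> h -` {h z} \<inter> X" using A assms(4,5) by simp
  then show ?thesis by simp
qed

lemma nn_integral_papangelou:
  fixes g :: "real \<Rightarrow> ennreal"
  assumes sets_Pt: "sets Pt = sets (P \<Otimes>\<^sub>M Gamma_M)" and "space P \<noteq> {}"
    and [measurable]: "g \<in> borel_measurable borel"
  shows "(\<integral>\<^sup>+G. g (papangelou P Pt Y x G) \<partial>distr Pt Gamma_M snd)
    = (\<integral>\<^sup>+z. g (real_cond_exp Pt (vimage_algebra (space Pt) snd Gamma_M) (\<lambda>z. (Y (fst z) x)\<^sup>2) z) \<partial>Pt)"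
proof -
  define h where "h = real_cond_exp Pt (vimage_algebra (space Pt) snd Gamma_M) (\<lambda>z. (Y (fst z) x)\<^sup>2)"
  define w0 where "w0 = (SOME w. w \<in> space P)"
  have w0: "w0 \<in> space P"
    using assms(2) unfolding w0_def by (simp add: some_in_eq)
  have space_Pt: "space Pt = space P \<times> space Gamma_M"
    using sets_eq_imp_space_eq[OF sets_Pt] by (simp add: space_pair_measure)
  have snd: "snd \<in> measurable Pt Gamma_M"
    using measurable_cong_sets[OF sets_Pt refl] measurable_snd by blast
  have h: "h \<in> borel_measurable (P \<Otimes>\<^sub>M Gamma_M)"
    using borel_measurable_cond_exp2 measurable_cong_sets[OF sets_Pt refl] unfolding h_def by blast
  txt \<open>h is measurable for the sigma-algebra generated by snd, so it ignores the Omega-coordinate;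
    hence evaluating it at the arbitrary point w0, as papangelou does, loses nothing.\<close>
  have h_factor: "h (w0, snd z) = h z" if "z \<in> space Pt" for z
  proof (rule measurable_vimage_algebra_factor[where h = h])
    show "h \<in> borel_measurable (vimage_algebra (space Pt) snd Gamma_M)"
      unfolding h_def by (rule borel_measurable_cond_exp)
    show "snd \<in> space Pt \<rightarrow> space Gamma_M" using measurable_space[OF snd] by (rule Pi_I)
    show "(w0, snd z) \<in> space Pt"
      unfolding space_Pt using w0 measurable_space[OF snd that] by (rule SigmaI)
    show "z \<in> space Pt" by (fact that)
  qed simp
  have "(\<integral>\<^sup>+G. g (papangelou P Pt Y x G) \<partial>distr Pt Gamma_M snd) = (\<integral>\<^sup>+G. g (h (w0, G)) \<partial>distr Pt Gamma_M snd)"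
    by (simp add: papangelou_def h_def w0_def)
  also have "\<dots> = (\<integral>\<^sup>+z. g (h (w0, snd z)) \<partial>Pt)"
    using measurable_Pair2[OF h w0] by (intro nn_integral_distr[OF snd]) measurable
  also have "\<dots> = (\<integral>\<^sup>+z. g (h z) \<partial>Pt)"
    by (rule nn_integral_cong) (simp add: h_factor)
  finally show ?thesis unfolding h_def .
qed

lemma nn_integral_papangelou_power_le:
  assumes sets_Pt: "sets Pt = sets (P \<Otimes>\<^sub>M Gamma_M)" and "prob_space Pt" and "space P \<noteq> {}"
    and "integrable Pt (\<lambda>z. (Y (fst z) x)\<^sup>2)" and "integrable Pt (\<lambda>z. Y (fst z) x ^ (2 * n))"
  shows "(\<integral>\<^sup>+G. ennreal (papangelou P Pt Y x G ^ n) \<partial>distr Pt Gamma_M snd)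
    \<le> ennreal (\<integral>z. Y (fst z) x ^ (2 * n) \<partial>Pt)"
proof -
  have snd: "snd \<in> measurable Pt Gamma_M"
    using measurable_cong_sets[OF sets_Pt refl] measurable_snd by blast
  have "subalgebra Pt (vimage_algebra (space Pt) snd Gamma_M)"
    using sets_image_in_sets[OF refl snd] by (simp add: subalgebra_def)
  moreover have "finite_measure Pt"
    using \<open>prob_space Pt\<close> by (simp add: prob_space_def)
  ultimately show ?thesis
    using nn_integral_papangelou[OF sets_Pt \<open>space P \<noteq> {}\<close>, of "\<lambda>t. ennreal (t ^ n)"]
      nn_integral_real_cond_exp_power_le[of Pt _ "\<lambda>z. (Y (fst z) x)\<^sup>2" n] assms(4,5)
    by (simp add: power_mult)
qed

theorem lemma3p1:
  fixes nu :: "'a::polish_space measure"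
    and kap :: "'a \<Rightarrow> 'a \<Rightarrow> real"
    and P :: "'w measure"
    and Y :: "'w \<Rightarrow> 'a \<Rightarrow> real"
    and pi :: "('a \<Rightarrow> real) \<Rightarrow> 'a set measure"
    and Pt :: "('w \<times> 'a set) measure"
  assumes lc: "locally_compact_space (euclidean :: 'a topology)"
    and nu_sets: "sets nu = sets borel"
    and nu_radon: "\<And>C. compact C \<Longrightarrow> emeasure nu C < \<infinity>"
    and nu_nonatomic: "\<And>x. emeasure nu {x} = 0"
    \<comment> \<open>sqrt K is the integral operator with kernel kap: bounded, self-adjoint, nonnegative on L^2(nu)\<close>
    and kap_meas: "(\<lambda>(x, z). kap x z) \<in> borel_measurable (nu \<Otimes>\<^sub>M nu)"
    and kap_L2: "AE x in nu. integrable nu (\<lambda>z. (kap x z)\<^sup>2)"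
    and kap_sym: "AE p in nu \<Otimes>\<^sub>M nu. kap (fst p) (snd p) = kap (snd p) (fst p)"
    and kap_bdd: "\<exists>C. \<forall>f. f \<in> borel_measurable nu \<longrightarrow> integrable nu (\<lambda>z. (f z)\<^sup>2) \<longrightarrow>
        integrable nu (\<lambda>x. (\<integral>z. kap x z * f z \<partial>nu)\<^sup>2) \<and>
        (\<integral>x. (\<integral>z. kap x z * f z \<partial>nu)\<^sup>2 \<partial>nu) \<le> C * (\<integral>z. (f z)\<^sup>2 \<partial>nu)"
    and kap_nonneg: "\<And>f. f \<in> borel_measurable nu \<Longrightarrow> integrable nu (\<lambda>z. (f z)\<^sup>2) \<Longrightarrow>
        (\<integral>x. f x * (\<integral>z. kap x z * f z \<partial>nu) \<partial>nu) \<ge> 0"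
    \<comment> \<open>K = (sqrt K)^2 is locally of trace class: tr(P_L K P_L) = int_L k(x,x) nu(dx) finite\<close>
    and K_loc_trace: "\<And>L. L \<in> relcompact_borel \<Longrightarrow>
        (\<integral>\<^sup>+x\<in>L. (\<integral>\<^sup>+z. ennreal ((kap x z)\<^sup>2) \<partial>nu) \<partial>nu) < \<infinity>"
    \<comment> \<open>the random field Y\<close>
    and P_prob: "prob_space P"
    and Y_meas: "(\<lambda>(w, x). Y w x) \<in> borel_measurable (P \<Otimes>\<^sub>M nu)"
    and Y_gauss: "AE x in nu. centered_gaussian P (\<lambda>w. Y w x)"
    and Y_cov: "AE p in nu \<Otimes>\<^sub>M nu.
        (\<integral>w. Y w (fst p) * Y w (snd p) \<partial>P) = kk nu kap (fst p) (snd p)"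
    and Y_var: "AE x in nu. (\<integral>w. (Y w x)\<^sup>2 \<partial>P) = kk nu kap x x"
    \<comment> \<open>pi g is the Poisson point process with intensity g(x) nu(dx)\<close>
    and pi_poisson: "\<And>g. g \<in> borel_measurable nu \<Longrightarrow> (\<forall>x. g x \<ge> 0) \<Longrightarrow>
        (\<forall>L\<in>relcompact_borel. (\<integral>\<^sup>+x\<in>L. ennreal (g x) \<partial>nu) < \<infinity>) \<Longrightarrow> poisson_pp nu g (pi g)"
    \<comment> \<open>Pt(dw, dG) = P(dw) pi_{Y(x,w)^2 nu(dx)}(dG) on Omega x Gamma\<close>
    and Pt_sets: "sets Pt = sets (P \<Otimes>\<^sub>M Gamma_M)"
    and Pt_rect: "\<And>A B. A \<in> sets P \<Longrightarrow> B \<in> sets Gamma_M \<Longrightarrow>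
        emeasure Pt (A \<times> B) = (\<integral>\<^sup>+w. indicator A w * emeasure (pi (\<lambda>x. (Y w x)\<^sup>2)) B \<partial>P)"
  shows "\<forall>n::nat. AE x in nu.
           (\<integral>\<^sup>+G. ennreal ((papangelou P Pt Y x G) ^ n) \<partial>(distr Pt Gamma_M snd))
           \<le> ennreal (fact (2 * n) / (2 ^ n * fact n) * (kk nu kap x x) ^ n)"
  proof (intro allI)
  fix n :: nat
  interpret P: prob_space P by (rule P_prob)
  have fst: "fst \<in> measurable Pt P"
    using measurable_cong_sets[OF Pt_sets refl] measurable_fst by blast
  have distr_fst: "distr Pt P fst = P"
    by (rule distr_fst_cox_mixture[OF lc nu_sets nu_radon kap_L2 K_loc_trace P_prob Y_meas Y_gauss Y_var
          pi_poisson Pt_sets Pt_rect])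
  have "prob_space Pt"
    using prob_space_distrD[OF fst] distr_fst P_prob by simp
  show "AE x in nu. (\<integral>\<^sup>+G. ennreal ((papangelou P Pt Y x G) ^ n) \<partial>(distr Pt Gamma_M snd))
      \<le> ennreal (fact (2 * n) / (2 ^ n * fact n) * (kk nu kap x x) ^ n)"
    using Y_gauss Y_var
  proof eventually_elim
    case (elim x)
    have moment: "has_bochner_integral Pt (\<lambda>z. Y (fst z) x ^ (2 * k))
        (fact (2 * k) / (2 ^ k * fact k) * (kk nu kap x x) ^ k)" for k
      using has_bochner_integral_measure_preserving[OF fst distr_fst
          centered_gaussian_even_moment[OF elim(1), of k]] elim(2) by simp
    have "(\<integral>\<^sup>+G. ennreal ((papangelou P Pt Y x G) ^ n) \<partial>(distr Pt Gamma_M snd))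
        \<le> ennreal (\<integral>z. Y (fst z) x ^ (2 * n) \<partial>Pt)"
      using moment[of 1] moment[of n] unfolding has_bochner_integral_iff
      by (intro nn_integral_papangelou_power_le[OF Pt_sets \<open>prob_space Pt\<close> P.not_empty]) simp_all
    then show ?case
      using moment[of n] by (simp add: has_bochner_integral_iff)
  qed
qed

end
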